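(* Let $m\ge1$ be an integer. For real $H>1$ let $\mathcal P_m(H)$ be the set of monic self-reciprocal polynomials $P\in\mathbb Z[t]$ of degree $2(m+1)$ having $2m$ roots on the complex unit circle and two positive real roots $\alpha,\alpha^{-1}$ with $1<\alpha\le H$, and let $\mathcal P^R_m(H)$ be the set of reducible (over $\mathbb Q$) polynomials in $\mathcal P_m(H)$. Then there is $C_2>0$ depending only on $m$ such that \[ \#\mathcal P^R_m(H)\le C_2\,H^{m}\quad\text{for all } H>1 . \]
   Context: A polynomial $P$ of degree $n$ is self-reciprocal if $P(t)=t^nP(t^{-1})$. *)

theory Defs
  imports "HOL-Computational_Algebra.Computational_Algebra"
begin

definition self_reciprocal :: "int poly \<Rightarrow> bool" where
  "self_reciprocal P \<longleftrightarrow>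
     (\<forall>t::complex. t \<noteq> 0 \<longrightarrow>
        poly (map_poly of_int P) t = t ^ degree P * poly (map_poly of_int P) (inverse t))"

definition Pset :: "nat \<Rightarrow> real \<Rightarrow> int poly set" where
  "Pset m H = {P. lead_coeff P = 1 \<and> degree P = 2 * (m + 1) \<and> self_reciprocal P \<and>
     (\<Sum>z\<in>{z::complex. poly (map_poly of_int P) z = 0 \<and> cmod z = 1}.
         order z (map_poly of_int P)) = 2 * m \<and>
     (\<exists>\<alpha>::real. 1 < \<alpha> \<and> \<alpha> \<le> H \<and> poly (map_poly of_int P) \<alpha> = 0
                 \<and> poly (map_poly of_int P) (inverse \<alpha>) = 0)}"

definition PRset :: "nat \<Rightarrow> real \<Rightarrow> int poly set" where
  "PRset m H = {P \<in> Pset m H. \<not> irreducible (map_poly (of_int :: int \<Rightarrow> rat) P)}"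

end

theory Submission
  imports Defs "Berlekamp_Zassenhaus.Factor_Bound"
begin

text \<open>
  A polynomial \<open>P \<in> Pset m H\<close> has Mahler measure \<open>\<alpha> \<le> H\<close>, so by Mignotte's bound its
  coefficients are \<open>O(H)\<close>; being self-reciprocal, it is determined by its coefficients of
  index \<open>1..m\<close> up to its middle coefficient.  If \<open>P\<close> is reducible, the simple root \<open>\<alpha>\<close>
  lies in only one of two nontrivial factors, so the other factor \<open>G\<close> has all roots in
  the closed unit disc, Mahler measure 1, and coefficients bounded in terms of \<open>m\<close> alone.
  Two reducible members sharing \<open>G\<close> and the coefficients \<open>1..m\<close> differ by \<open>c t\<^sup>m\<^sup>+\<^sup>1\<close>
  and have a common nonzero root (a root of \<open>G\<close>), so \<open>c = 0\<close>.  Counting the pairs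
  (factor, coefficient vector) gives the bound \<open>O(H\<^sup>m)\<close>.
\<close>

lemma order_prod_linear_factors:
  "Polynomial.order z (\<Prod>a\<leftarrow>as. [:- a, 1:]) = count (mset as) (z :: 'a :: idom)"
proof -
  have "Polynomial.order z (\<Prod>a\<leftarrow>as. [:- a, 1:]) = (\<Sum>a\<leftarrow>as. if a = z then 1 else 0)"
    by (subst order_prod_list) (auto simp: o_def order_linear' simp del: pCons_one)
  also have "\<dots> = count (mset as) z"
    by (induction as) auto
  finally show ?thesis .
qed

lemma order_complex_roots_int:
  assumes "P \<noteq> 0"
  shows "Polynomial.order z (of_int_poly P) = count (mset (complex_roots_int P)) z"
proof -
  have "lead_coeff (of_int_poly P :: complex poly) \<noteq> 0" using assms by simp
  from order_smult[OF this, of z "\<Prod>a\<leftarrow>complex_roots_int P. [:- a, 1:]"] show ?thesis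
    unfolding reconstruct_with_type_conversion order_prod_linear_factors .
qed

lemma root_iff_mem_complex_roots_int:
  assumes "P \<noteq> 0"
  shows "poly (of_int_poly P) z = 0 \<longleftrightarrow> z \<in> set (complex_roots_int P)"
  using order_root[of "of_int_poly P" z] order_complex_roots_int[OF assms] assms by simp

lemma sum_order_roots_eq_size_filter:
  assumes "P \<noteq> 0"
  shows "(\<Sum>z\<in>{z. poly (of_int_poly P) z = 0 \<and> Q z}. Polynomial.order z (of_int_poly P)) =
    size (filter_mset Q (mset (complex_roots_int P)))"
proof -
  have "{z. poly (of_int_poly P) z = 0 \<and> Q z} = set_mset (filter_mset Q (mset (complex_roots_int P)))"
    using root_iff_mem_complex_roots_int[OF assms] by auto
  then show ?thesis
    by (simp add: size_multiset_overloaded_eq order_complex_roots_int[OF assms])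
qed

lemma real_root_mem_complex_roots_int:
  assumes "P \<noteq> 0" "poly (of_int_poly P) x = (0 :: real)"
  shows "complex_of_real x \<in> set (complex_roots_int P)"
proof -
  have "poly (of_int_poly P) (complex_of_real x) = complex_of_real (poly (of_int_poly P) x)"
    using of_real_hom.poly_map_poly[of "of_int_poly P" x] by (simp add: map_poly_map_poly o_def)
  with assms show ?thesis using root_iff_mem_complex_roots_int[OF assms(1)] by simp
qed

lemma mset_complex_roots_int_mult:
  assumes "g \<noteq> 0" "h \<noteq> 0"
  shows "mset (complex_roots_int (g * h)) = mset (complex_roots_int g) + mset (complex_roots_int h)"
  unfolding complex_roots_int_def of_int_poly_hom.hom_mult
  by (rule complex_roots_complex_prod) (use assms in auto)

lemma mahler_measure_mset:
  "mahler_measure g =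
     real_of_int \<bar>lead_coeff g\<bar> * (\<Prod>a\<in>#mset (complex_roots_int g). max 1 (cmod a))"
proof -
  have prod: "(\<Prod>a\<leftarrow>xs. f a) = (\<Prod>a\<in>#mset xs. f a)" for xs and f :: "complex \<Rightarrow> real"
    by (induction xs) auto
  show ?thesis
    unfolding mahler_measure_def mahler_measure_poly_def complex_roots_int_def prod by simp
qed

lemma abs_coeff_le_pow2_mahler_measure:
  "real_of_int \<bar>poly.coeff g k\<bar> \<le> 2 ^ degree g * mahler_measure g"
proof -
  have "real (degree g choose k) \<le> 2 ^ degree g"
    using of_nat_mono[OF binomial_le_pow2[of "degree g" k], where 'a = real] by simp
  then show ?thesis
    using Mignotte_bound[of g k] mahler_measure_ge_0[of g] by (meson mult_right_mono order_trans)
qed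

lemma self_reciprocal_coeff:
  assumes "self_reciprocal P" "k \<le> degree P"
  shows "poly.coeff P k = poly.coeff P (degree P - k)"
proof -
  let ?p = "of_int_poly P :: complex poly"
  have "poly ([:0, 1:] * (?p - reflect_poly ?p)) t = 0" for t
  proof (cases "t = 0")
    case False
    then have "poly ?p t = t ^ degree P * poly ?p (inverse t)"
      using assms(1) unfolding self_reciprocal_def by blast
    with poly_reflect_poly_nz[OF False, of ?p] show ?thesis by simp
  qed simp
  then have "[:0, 1:] * (?p - reflect_poly ?p) = 0"
    using poly_all_0_iff_0 by blast
  then have "reflect_poly ?p = ?p" by simp
  then have "poly.coeff ?p k = poly.coeff ?p (degree P - k)"
    using coeff_reflect_poly[of ?p k] assms(2) by simp
  then show ?thesis by simp
qed

lemma Pset_complex_roots: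
  assumes "P \<in> Pset m H"
  obtains \<alpha> :: real and R where "1 < \<alpha>" "\<alpha> \<le> H"
    "mset (complex_roots_int P) = {#complex_of_real \<alpha>, complex_of_real (inverse \<alpha>)#} + R"
    "\<forall>z\<in>#R. cmod z = 1"
proof -
  from assms have P1: "lead_coeff P = 1" and dP: "degree P = 2 * (m + 1)"
    and circle: "(\<Sum>z\<in>{z. poly (of_int_poly P) z = 0 \<and> cmod z = 1}.
                   Polynomial.order z (of_int_poly P)) = 2 * m"
    and "\<exists>\<alpha>::real. 1 < \<alpha> \<and> \<alpha> \<le> H \<and> poly (of_int_poly P) \<alpha> = 0
                 \<and> poly (of_int_poly P) (inverse \<alpha>) = 0"
    unfolding Pset_def by auto
  then obtain \<alpha> :: real where \<alpha>: "1 < \<alpha>" "\<alpha> \<le> H"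
    and roots: "poly (of_int_poly P) \<alpha> = 0" "poly (of_int_poly P) (inverse \<alpha>) = 0"
    by auto
  have P0: "P \<noteq> 0" using P1 by auto
  define Rs where "Rs = mset (complex_roots_int P)"
  define R where "R = filter_mset (\<lambda>z. cmod z = 1) Rs"
  have "size R = 2 * m"
    using circle by (simp add: sum_order_roots_eq_size_filter[OF P0] R_def Rs_def)
  moreover have "size Rs = 2 * m + 2"
    using complex_roots_int(2)[of P] dP by (simp add: Rs_def)
  moreover have Rs_split: "Rs = R + filter_mset (\<lambda>z. cmod z \<noteq> 1) Rs"
    unfolding R_def by (rule multiset_partition)
  ultimately have size2: "size (filter_mset (\<lambda>z. cmod z \<noteq> 1) Rs) = 2"
    by (metis size_union add_left_cancel add_2_eq_Suc' mult_2 add.commute)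
  have "inverse \<alpha> < 1" using \<alpha> by (simp add: inverse_less_1_iff)
  then have "cmod (complex_of_real \<alpha>) \<noteq> 1" "cmod (complex_of_real (inverse \<alpha>)) \<noteq> 1"
    "complex_of_real (inverse \<alpha>) \<noteq> complex_of_real \<alpha>"
    using \<alpha> by (auto simp only: norm_of_real of_real_eq_iff) auto
  then have sub: "{#complex_of_real \<alpha>, complex_of_real (inverse \<alpha>)#} \<subseteq>#
      filter_mset (\<lambda>z. cmod z \<noteq> 1) Rs"
    using real_root_mem_complex_roots_int[OF P0 roots(1)]
      real_root_mem_complex_roots_int[OF P0 roots(2)]
    by (auto simp: Rs_def insert_subset_eq_iff in_diff_count)
  then have "filter_mset (\<lambda>z. cmod z \<noteq> 1) Rs = {#complex_of_real \<alpha>, complex_of_real (inverse \<alpha>)#}"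
    using subset_mset.add_diff_inverse[OF sub] size_Diff_submset[OF sub] size2 by simp
  then have "mset (complex_roots_int P) = {#complex_of_real \<alpha>, complex_of_real (inverse \<alpha>)#} + R"
    using Rs_split by (simp add: Rs_def add.commute)
  moreover have "\<forall>z\<in>#R. cmod z = 1" by (simp add: R_def)
  ultimately show thesis by (rule that[OF \<alpha>])
qed

lemma mahler_measure_Pset_le:
  assumes "P \<in> Pset m H"
  shows "mahler_measure P \<le> H"
proof -
  obtain \<alpha> R where \<alpha>: "1 < \<alpha>" "\<alpha> \<le> H"
    and roots: "mset (complex_roots_int P) = {#complex_of_real \<alpha>, complex_of_real (inverse \<alpha>)#} + R"
    and circle: "\<forall>z\<in>#R. cmod z = 1"
    by (rule Pset_complex_roots[OF assms])
  have "lead_coeff P = 1" using assms unfolding Pset_def by blast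
  then have "mahler_measure P = max 1 \<alpha> * max 1 (inverse \<alpha>) * (\<Prod>a\<in>#R. max 1 (cmod a))"
    using \<alpha> by (simp add: mahler_measure_mset roots norm_inverse abs_of_pos)
  also have "(\<Prod>a\<in>#R. max 1 (cmod a)) = 1"
    using circle by (simp add: prod_mset.neutral)
  finally show ?thesis using \<alpha> by (simp add: inverse_le_1_iff)
qed

lemma Pset_abs_coeff_le:
  assumes "P \<in> Pset m H"
  shows "real_of_int \<bar>poly.coeff P k\<bar> \<le> 2 ^ (2 * m + 2) * H"
proof -
  have "real_of_int \<bar>poly.coeff P k\<bar> \<le> 2 ^ degree P * mahler_measure P"
    by (rule abs_coeff_le_pow2_mahler_measure)
  also have "\<dots> \<le> 2 ^ degree P * H"
    using mahler_measure_Pset_le[OF assms] by (simp add: mult_left_mono)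
  finally show ?thesis using assms unfolding Pset_def by auto
qed

lemma Pset_coeff_0:
  assumes "P \<in> Pset m H"
  shows "poly.coeff P 0 = 1"
  using self_reciprocal_coeff[of P 0] assms unfolding Pset_def by auto

definition bounded_int_polys :: "nat \<Rightarrow> int \<Rightarrow> int poly set" where
  "bounded_int_polys d B = {G. degree G \<le> d \<and> (\<forall>k. \<bar>poly.coeff G k\<bar> \<le> B)}"

lemma finite_bounded_int_polys: "finite (bounded_int_polys d B)"
proof (rule inj_on_finite)
  show "inj_on (\<lambda>G. map (poly.coeff G) [0..<Suc d]) (bounded_int_polys d B)"
  proof (rule inj_onI, rule poly_eqI)
    fix G1 G2 k
    assume "G1 \<in> bounded_int_polys d B" "G2 \<in> bounded_int_polys d B"
      and "map (poly.coeff G1) [0..<Suc d] = map (poly.coeff G2) [0..<Suc d]"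
    then show "poly.coeff G1 k = poly.coeff G2 k"
      by (cases "k \<le> d") (auto simp: bounded_int_polys_def coeff_eq_0 simp del: upt_Suc)
  qed
  have "poly.coeff G k \<in> {-B..B}" if "G \<in> bounded_int_polys d B" for G k
  proof -
    from that have "\<bar>poly.coeff G k\<bar> \<le> B" by (simp add: bounded_int_polys_def)
    then show ?thesis by (auto simp: abs_le_iff)
  qed
  then show "(\<lambda>G. map (poly.coeff G) [0..<Suc d]) ` bounded_int_polys d B
      \<subseteq> {xs. set xs \<subseteq> {-B..B} \<and> length xs = Suc d}"
    by auto
  show "finite {xs. set xs \<subseteq> {-B..B} \<and> length xs = Suc d}"
    by (rule finite_lists_length_eq) simp
qed

lemma not_irreducible_int_poly_factor:
  assumes "\<not> irreducible (of_int_poly P :: rat poly)" "degree P > 0"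
  obtains g h where "P = g * h" "degree g > 0" "degree h > 0"
proof -
  let ?Q = "of_int_poly P :: rat poly"
  have "?Q \<noteq> 0" "\<not> is_unit ?Q" using assms(2) by (auto simp: is_unit_iff_degree)
  with assms(1) obtain a b where "?Q = a * b" "\<not> is_unit a" "\<not> is_unit b"
    unfolding irreducible_def by blast
  moreover from this have "a \<noteq> 0" "b \<noteq> 0" using \<open>?Q \<noteq> 0\<close> by auto
  ultimately have "?Q = a * b" "degree a > 0" "degree b > 0"
    by (auto simp: is_unit_iff_degree)
  with rat_to_int_factor[OF this(1)] that show thesis by auto
qed

lemma unit_disc_factor_in_bounded_int_polys:
  assumes "P = G * K" "lead_coeff P = 1" "\<forall>z\<in>set (complex_roots_int G). cmod z \<le> 1"
  shows "G \<in> bounded_int_polys (degree P) (2 ^ degree P)"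
proof -
  have "G \<noteq> 0" "K \<noteq> 0" using assms(1,2) by auto
  then have deg: "degree G \<le> degree P" using assms(1) by (simp add: degree_mult_eq)
  have "lead_coeff G * lead_coeff K = 1" using assms(1,2) by (simp add: lead_coeff_mult)
  then have "\<bar>lead_coeff G\<bar> = 1" using zmult_eq_1_iff by auto
  moreover have "(\<Prod>a\<in>#mset (complex_roots_int G). max 1 (cmod a)) = 1"
    using assms(3) by (simp add: prod_mset.neutral)
  ultimately have "mahler_measure G = 1" by (simp add: mahler_measure_mset)
  then have "real_of_int \<bar>poly.coeff G k\<bar> \<le> 2 ^ degree G" for k
    using abs_coeff_le_pow2_mahler_measure[of G k] by simp
  moreover have "(2::real) ^ degree G \<le> 2 ^ degree P"
    by (rule power_increasing[OF deg]) simp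
  ultimately have "real_of_int \<bar>poly.coeff G k\<bar> \<le> 2 ^ degree P" for k
    by (meson order_trans)
  then have "\<bar>poly.coeff G k\<bar> \<le> 2 ^ degree P" for k
    by (metis of_int_le_iff of_int_numeral of_int_power)
  with deg show ?thesis by (simp add: bounded_int_polys_def)
qed

lemma factor_without_simple_root:
  assumes "P = g * h" "P \<noteq> 0" "count (mset (complex_roots_int P)) z = 1"
  obtains G K where "P = G * K" "G = g \<or> G = h" "z \<notin> set (complex_roots_int G)"
proof -
  have "g \<noteq> 0" "h \<noteq> 0" using assms(1,2) by auto
  then have "count (mset (complex_roots_int g)) z + count (mset (complex_roots_int h)) z = 1"
    using assms by (simp add: mset_complex_roots_int_mult)
  then have "z \<notin> set (complex_roots_int g) \<or> z \<notin> set (complex_roots_int h)"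
    by (auto simp: add_is_1)
  then show thesis
  proof
    assume "z \<notin> set (complex_roots_int g)"
    then show thesis using assms(1) by (intro that[of g h]) simp_all
  next
    assume "z \<notin> set (complex_roots_int h)"
    then show thesis using assms(1) by (intro that[of h g]) (simp_all add: mult.commute)
  qed
qed

lemma PRset_has_bounded_factor:
  assumes "P \<in> PRset m H"
  obtains G where "G \<in> bounded_int_polys (2 * m + 2) (2 ^ (2 * m + 2))" "G dvd P" "degree G > 0"
proof -
  from assms have P: "P \<in> Pset m H" and irr: "\<not> irreducible (of_int_poly P :: rat poly)"
    by (auto simp: PRset_def)
  from P have P1: "lead_coeff P = 1" and dP: "degree P = 2 * m + 2"
    unfolding Pset_def by auto
  then have P0: "P \<noteq> 0" by auto
  obtain \<alpha> R where \<alpha>: "1 < \<alpha>" "\<alpha> \<le> H"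
    and roots: "mset (complex_roots_int P) = {#complex_of_real \<alpha>, complex_of_real (inverse \<alpha>)#} + R"
    and circle: "\<forall>z\<in>#R. cmod z = 1"
    by (rule Pset_complex_roots[OF P])
  obtain g h where gh: "P = g * h" "degree g > 0" "degree h > 0"
    using not_irreducible_int_poly_factor[OF irr] dP by auto
  have "inverse \<alpha> < 1" using \<alpha> by (simp add: inverse_less_1_iff)
  then have "complex_of_real (inverse \<alpha>) \<noteq> complex_of_real \<alpha>" "complex_of_real \<alpha> \<notin># R"
    using \<alpha> circle by (auto simp only: of_real_eq_iff) auto
  then have "count (mset (complex_roots_int P)) (complex_of_real \<alpha>) = 1"
    by (simp add: roots count_eq_zero_iff)
  then obtain G K where GK: "P = G * K" "G = g \<or> G = h"
    and no_\<alpha>: "complex_of_real \<alpha> \<notin> set (complex_roots_int G)"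
    by (rule factor_without_simple_root[OF gh(1) P0])
  have "\<forall>z\<in>set (complex_roots_int G). cmod z \<le> 1"
  proof
    fix z assume z: "z \<in> set (complex_roots_int G)"
    have "G \<noteq> 0" "K \<noteq> 0" using GK(1) P0 by auto
    with z have "z \<in># mset (complex_roots_int P)"
      by (simp add: GK(1) mset_complex_roots_int_mult)
    with z no_\<alpha> \<alpha> \<open>inverse \<alpha> < 1\<close> circle show "cmod z \<le> 1"
      by (auto simp: roots norm_inverse abs_of_pos)
  qed
  from unit_disc_factor_in_bounded_int_polys[OF GK(1) P1 this]
  have "G \<in> bounded_int_polys (2 * m + 2) (2 ^ (2 * m + 2))" unfolding dP .
  moreover have "G dvd P" using GK(1) by (rule dvdI)
  moreover have "degree G > 0" using GK(2) gh(2,3) by auto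
  ultimately show thesis by (rule that)
qed

lemma Pset_diff_eq_monom:
  assumes P1: "P1 \<in> Pset m H" and P2: "P2 \<in> Pset m H"
    and low: "\<forall>k\<in>{1..m}. poly.coeff P1 k = poly.coeff P2 k"
  shows "P1 - P2 = Polynomial.monom (poly.coeff P1 (m + 1) - poly.coeff P2 (m + 1)) (m + 1)"
proof -
  have sym: "poly.coeff P k = poly.coeff P (2 * m + 2 - k)"
    if "P \<in> Pset m H" "k \<le> 2 * m + 2" for P k
    using self_reciprocal_coeff[of P k] that by (simp add: Pset_def)
  have low': "poly.coeff P1 k = poly.coeff P2 k" if "k \<le> m" for k
    using low that Pset_coeff_0[OF P1] Pset_coeff_0[OF P2] by (cases "k = 0") auto
  have "poly.coeff P1 k = poly.coeff P2 k" if "k \<noteq> m + 1" for k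
  proof (cases "k \<le> 2 * m + 2")
    case True
    then show ?thesis
      using that low'[of k] low'[of "2 * m + 2 - k"] sym[OF P1 True] sym[OF P2 True]
      by (cases "k \<le> m") auto
  next
    case False
    then show ?thesis using P1 P2 by (simp add: Pset_def coeff_eq_0)
  qed
  then show ?thesis by (intro poly_eqI) (simp add: coeff_monom)
qed

lemma eq_if_diff_monom_and_common_factor:
  fixes P1 P2 G :: "int poly"
  assumes "P1 - P2 = Polynomial.monom c n" "G dvd P1" "G dvd P2" "degree G > 0"
    and "poly.coeff P1 0 \<noteq> 0"
  shows "P1 = P2"
proof -
  obtain z :: complex where z: "poly (of_int_poly G) z = 0"
    using fundamental_theorem_of_algebra[of "of_int_poly G"] assms(4) by (auto simp: constant_degree)
  have "poly (of_int_poly P) z = 0" if "G dvd P" for P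
    using that z by (auto elim!: dvdE simp: hom_distribs)
  with assms(2,3) have roots: "poly (of_int_poly P1) z = 0" "poly (of_int_poly P2) z = 0" by auto
  have "z \<noteq> 0" using roots(1) assms(5) by (auto simp: poly_0_coeff_0)
  have "poly (of_int_poly (P1 - P2)) z = 0" using roots by (simp add: hom_distribs)
  then have "of_int c * z ^ n = 0" 
    unfolding assms(1) by (simp add: of_int_hom.map_poly_hom_monom poly_monom)
  with \<open>z \<noteq> 0\<close> have "c = 0" by simp
  with assms(1) show ?thesis by simp
qed

lemma card_int_lists_le:
  fixes x :: real
  assumes "1 \<le> x"
  shows "real (card {xs. set xs \<subseteq> {-\<lfloor>x\<rfloor>..\<lfloor>x\<rfloor>} \<and> length xs = n}) \<le> (3 * x) ^ n"
proof -
  have "0 \<le> \<lfloor>x\<rfloor>" using assms by simp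
  then have "real (nat (2 * \<lfloor>x\<rfloor> + 1)) \<le> 3 * x"
    using assms of_int_floor_le[of x] by simp linarith
  then have "real (nat (2 * \<lfloor>x\<rfloor> + 1)) ^ n \<le> (3 * x) ^ n"
    by (rule power_mono) simp
  then show ?thesis by (simp add: card_lists_length_eq)
qed

lemma PRset_inj_into_factors_and_coeffs:
  fixes m :: nat and H :: real
  defines "b \<equiv> \<lfloor>2 ^ (2 * m + 2) * H\<rfloor>"
  obtains f where "inj_on f (PRset m H)"
    "f ` PRset m H \<subseteq> bounded_int_polys (2 * m + 2) (2 ^ (2 * m + 2)) \<times>
                      {xs. set xs \<subseteq> {-b..b} \<and> length xs = m}"
proof -
  define B where "B = bounded_int_polys (2 * m + 2) (2 ^ (2 * m + 2))"
  have "\<exists>G. G \<in> B \<and> G dvd P \<and> degree G > 0" if P: "P \<in> PRset m H" for P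
  proof -
    obtain G where "G \<in> B" "G dvd P" "degree G > 0"
      unfolding B_def by (rule PRset_has_bounded_factor[OF P])
    then show ?thesis by blast
  qed
  then obtain factor where factor: "\<And>P. P \<in> PRset m H \<Longrightarrow>
      factor P \<in> B \<and> factor P dvd P \<and> degree (factor P) > 0"
    by metis
  define signature where "signature P = (factor P, map (poly.coeff P) [1..<m + 1])" for P
  have "inj_on signature (PRset m H)"
  proof (rule inj_onI)
    fix P1 P2 assume P1: "P1 \<in> PRset m H" and P2: "P2 \<in> PRset m H"
      and "signature P1 = signature P2"
    then have same_factor: "factor P1 = factor P2"
      and low: "\<forall>k\<in>{1..m}. poly.coeff P1 k = poly.coeff P2 k"
      by (auto simp: signature_def map_eq_conv simp del: upt_Suc)
    from P1 P2 have "P1 \<in> Pset m H" "P2 \<in> Pset m H" by (simp_all add: PRset_def)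
    from Pset_diff_eq_monom[OF this low] show "P1 = P2"
    proof (rule eq_if_diff_monom_and_common_factor)
      show "factor P1 dvd P1" "0 < degree (factor P1)" using factor[OF P1] by simp_all
      show "factor P1 dvd P2" using factor[OF P2] same_factor by simp
      show "poly.coeff P1 0 \<noteq> 0" using Pset_coeff_0 \<open>P1 \<in> Pset m H\<close> by simp
    qed
  qed
  moreover have "signature ` PRset m H \<subseteq> B \<times> {xs. set xs \<subseteq> {-b..b} \<and> length xs = m}"
  proof (rule image_subsetI)
    fix P assume P: "P \<in> PRset m H"
    have "poly.coeff P k \<in> {-b..b}" for k
    proof -
      have "real_of_int \<bar>poly.coeff P k\<bar> \<le> 2 ^ (2 * m + 2) * H"
        using P by (intro Pset_abs_coeff_le) (simp add: PRset_def)
      then have "\<bar>poly.coeff P k\<bar> \<le> b" by (simp add: b_def le_floor_iff)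
      then show ?thesis by (auto simp: abs_le_iff)
    qed
    with factor[OF P] show "signature P \<in> B \<times> {xs. set xs \<subseteq> {-b..b} \<and> length xs = m}"
      by (auto simp: signature_def)
  qed
  ultimately show thesis unfolding B_def by (rule that)
qed

theorem lemma4:
  fixes m :: nat
  assumes "m \<ge> 1"
  shows "\<exists>C2>0. \<forall>H::real. H > 1 \<longrightarrow>
           finite (PRset m H) \<and> real (card (PRset m H)) \<le> C2 * H ^ m"
proof -
  define B where "B = bounded_int_polys (2 * m + 2) (2 ^ (2 * m + 2))"
  have "0 \<in> B" by (simp add: B_def bounded_int_polys_def)
  then have "card B > 0" using finite_bounded_int_polys by (auto simp: B_def card_gt_0_iff)
  moreover have "finite (PRset m H) \<and>
      real (card (PRset m H)) \<le> real (card B) * (3 * 2 ^ (2 * m + 2)) ^ m * H ^ m"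
    if "H > 1" for H :: real
  proof -
    define x :: real where "x = 2 ^ (2 * m + 2) * H"
    define L where "L = {xs. set xs \<subseteq> {-\<lfloor>x\<rfloor>..\<lfloor>x\<rfloor>} \<and> length xs = m}"
    obtain f where inj: "inj_on f (PRset m H)" and img: "f ` PRset m H \<subseteq> B \<times> L"
      unfolding B_def L_def x_def by (rule PRset_inj_into_factors_and_coeffs)
    have fin: "finite (B \<times> L)"
      using finite_bounded_int_polys by (simp add: B_def L_def finite_lists_length_eq)
    have "1 * 1 \<le> x" using that unfolding x_def by (intro mult_mono one_le_power) auto
    have "real (card (PRset m H)) \<le> real (card B) * real (card L)"
      using card_inj_on_le[OF inj img fin] by (simp add: card_cartesian_product flip: of_nat_mult)
    also have "\<dots> \<le> real (card B) * (3 * x) ^ m"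
      using card_int_lists_le[of x m] \<open>1 * 1 \<le> x\<close> by (simp add: L_def mult_left_mono)
    finally show ?thesis
      using inj_on_finite[OF inj img fin] by (simp add: x_def power_mult_distrib mult.assoc)
  qed
  ultimately show ?thesis by (intro exI[of _ "real (card B) * (3 * 2 ^ (2 * m + 2)) ^ m"]) auto
qed

end
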